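(* Let $M$ be a timelike surface in $\mathbb{R}^{n,1}$ with a canonical null direction with respect to a constant unit spacelike vector $Z$, with $W$ and $a$ as below. Then the Gaussian curvature of $M$ is $K=Z^{\top}(a)$.
   Context: $\mathbb{R}^{n,1}$ is $\mathbb{R}^{n+1}$ with the metric $-dx_1^2+dx_2^2+\dots+dx_{n+1}^2$. A surface is timelike if the induced metric has signature $(1,1)$; a vector $v$ is lightlike if $v\ne0$ and $\langle v,v\rangle=0$. For a constant vector $Z$, $Z=Z^\top+Z^\perp$ along $M$; $M$ has a canonical null direction with respect to $Z$ if $Z^\top$ is lightlike everywhere on $M$. $W$ is the unique lightlike tangent field with $\langle Z^\top,W\rangle=-1$, and $a:=\langle II(W,W),Z^\perp\rangle$, $II$ the second fundamental form. $K$ is the (sectional) Gaussian curvature of the induced Lorentzian metric. *)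

theory Defs
  imports "HOL-Analysis.Analysis"
begin

text \<open>Minkowski space R^{n,1}: vectors are real^'m with CARD('m) = n+1, and a
  distinguished index t0 carrying the timelike coordinate (metric -dx_t0^2 + sum of others).\<close>

definition mink :: "'m::finite \<Rightarrow> real^'m \<Rightarrow> real^'m \<Rightarrow> real" where
  "mink t0 x y = - (x$t0 * y$t0) + (\<Sum>i\<in>UNIV - {t0}. x$i * y$i)"

definition pd :: "nat \<Rightarrow> (real \<times> real \<Rightarrow> 'a::real_normed_vector) \<Rightarrow> real \<times> real \<Rightarrow> 'a" where
  "pd i F p = (if i = 0 then vector_derivative (\<lambda>s. F (s, snd p)) (at (fst p))
                        else vector_derivative (\<lambda>t. F (fst p, t)) (at (snd p)))"

definition pdiffble :: "nat \<Rightarrow> (real \<times> real \<Rightarrow> 'a::real_normed_vector) \<Rightarrow> real \<times> real \<Rightarrow> bool" where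
  "pdiffble i F p = (if i = 0 then (\<lambda>s. F (s, snd p)) differentiable (at (fst p))
                             else (\<lambda>t. F (fst p, t)) differentiable (at (snd p)))"

fun Ck :: "nat \<Rightarrow> (real \<times> real \<Rightarrow> 'a::real_normed_vector) \<Rightarrow> (real \<times> real) set \<Rightarrow> bool" where
  "Ck 0 F U = continuous_on U F"
| "Ck (Suc k) F U = (continuous_on U F \<and> (\<forall>i<2. \<forall>p\<in>U. pdiffble i F p)
                      \<and> (\<forall>i<2. Ck k (pd i F) U))"

definition smooth2 :: "(real \<times> real \<Rightarrow> 'a::real_normed_vector) \<Rightarrow> (real \<times> real) set \<Rightarrow> bool" where
  "smooth2 F U = (\<forall>k. Ck k F U)"

definition gm :: "'m::finite \<Rightarrow> (real \<times> real \<Rightarrow> real^'m) \<Rightarrow> nat \<Rightarrow> nat \<Rightarrow> real \<times> real \<Rightarrow> real" where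
  "gm t0 X i j p = mink t0 (pd i X p) (pd j X p)"

definition gdet :: "'m::finite \<Rightarrow> (real \<times> real \<Rightarrow> real^'m) \<Rightarrow> real \<times> real \<Rightarrow> real" where
  "gdet t0 X p = gm t0 X 0 0 p * gm t0 X 1 1 p - gm t0 X 0 1 p * gm t0 X 1 0 p"

definition ginv :: "'m::finite \<Rightarrow> (real \<times> real \<Rightarrow> real^'m) \<Rightarrow> nat \<Rightarrow> nat \<Rightarrow> real \<times> real \<Rightarrow> real" where
  "ginv t0 X i j p =
     (if i = 0 \<and> j = 0 then gm t0 X 1 1 p / gdet t0 X p
      else if i = 1 \<and> j = 1 then gm t0 X 0 0 p / gdet t0 X p
      else - gm t0 X i j p / gdet t0 X p)"

text \<open>Timelike immersion: induced metric has signature (1,1), i.e. det g < 0.\<close>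

definition timelike_surface :: "'m::finite \<Rightarrow> (real \<times> real \<Rightarrow> real^'m) \<Rightarrow> (real \<times> real) set \<Rightarrow> bool" where
  "timelike_surface t0 X U = (open U \<and> smooth2 X U \<and> (\<forall>p\<in>U. gdet t0 X p < 0))"

text \<open>Christoffel symbols Gamma^k_ij, Riemann tensor R(d_i,d_j)d_k = R^l_ijk d_l with
  R(X,Y)Z = nabla_X nabla_Y Z - nabla_Y nabla_X Z - nabla_[X,Y] Z, and the sectional
  (Gaussian) curvature K = <R(d_0,d_1)d_1, d_0> / (g_00 g_11 - g_01^2).\<close>

definition christoffel :: "'m::finite \<Rightarrow> (real \<times> real \<Rightarrow> real^'m) \<Rightarrow> nat \<Rightarrow> nat \<Rightarrow> nat \<Rightarrow> real \<times> real \<Rightarrow> real" where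
  "christoffel t0 X k i j p = (1/2) * (\<Sum>l<2. ginv t0 X k l p *
      (pd i (gm t0 X j l) p + pd j (gm t0 X i l) p - pd l (gm t0 X i j) p))"

definition riemann :: "'m::finite \<Rightarrow> (real \<times> real \<Rightarrow> real^'m) \<Rightarrow> nat \<Rightarrow> nat \<Rightarrow> nat \<Rightarrow> nat \<Rightarrow> real \<times> real \<Rightarrow> real" where
  "riemann t0 X l i j k p =
     pd i (christoffel t0 X l j k) p - pd j (christoffel t0 X l i k) p
     + (\<Sum>m<2. christoffel t0 X l i m p * christoffel t0 X m j k p
              - christoffel t0 X l j m p * christoffel t0 X m i k p)"

definition gauss_curv :: "'m::finite \<Rightarrow> (real \<times> real \<Rightarrow> real^'m) \<Rightarrow> real \<times> real \<Rightarrow> real" where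
  "gauss_curv t0 X p = (\<Sum>l<2. riemann t0 X l 0 1 1 p * gm t0 X l 0 p) / gdet t0 X p"

definition tcoef :: "'m::finite \<Rightarrow> (real \<times> real \<Rightarrow> real^'m) \<Rightarrow> real^'m \<Rightarrow> nat \<Rightarrow> real \<times> real \<Rightarrow> real" where
  "tcoef t0 X v i p = (\<Sum>j<2. ginv t0 X i j p * mink t0 v (pd j X p))"

definition tanpart :: "'m::finite \<Rightarrow> (real \<times> real \<Rightarrow> real^'m) \<Rightarrow> real^'m \<Rightarrow> real \<times> real \<Rightarrow> real^'m" where
  "tanpart t0 X v p = (\<Sum>i<2. tcoef t0 X v i p *\<^sub>R pd i X p)"

definition norpart :: "'m::finite \<Rightarrow> (real \<times> real \<Rightarrow> real^'m) \<Rightarrow> real^'m \<Rightarrow> real \<times> real \<Rightarrow> real^'m" where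
  "norpart t0 X v p = v - tanpart t0 X v p"

text \<open>Second fundamental form II(d_i,d_j) = (X_ij)^perp, extended bilinearly:
  II(V,V') for V = sum v_i X_i, V' = sum v'_j X_j.\<close>

definition sff :: "'m::finite \<Rightarrow> (real \<times> real \<Rightarrow> real^'m) \<Rightarrow> (nat \<Rightarrow> real) \<Rightarrow> (nat \<Rightarrow> real) \<Rightarrow> real \<times> real \<Rightarrow> real^'m" where
  "sff t0 X v v' p = (\<Sum>i<2. \<Sum>j<2. (v i * v' j) *\<^sub>R norpart t0 X (pd i (pd j X) p) p)"

definition tvec :: "(real \<times> real \<Rightarrow> real^'m) \<Rightarrow> (nat \<Rightarrow> real \<times> real \<Rightarrow> real) \<Rightarrow> real \<times> real \<Rightarrow> real^'m" where
  "tvec X w p = (\<Sum>i<2. w i p *\<^sub>R pd i X p)"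

definition dir_deriv :: "(nat \<Rightarrow> real \<times> real \<Rightarrow> real) \<Rightarrow> (real \<times> real \<Rightarrow> real) \<Rightarrow> real \<times> real \<Rightarrow> real" where
  "dir_deriv c f p = (\<Sum>i<2. c i p * pd i f p)"

end

theory Submission
  imports Defs
begin

text \<open>
  Differentiating \<open>\<langle>Z\<^sup>\<top>, Z\<^sup>\<top>\<rangle> = 0\<close> and using that \<open>Z\<close> is constant shows that \<open>Z\<^sup>\<top>\<close> lies in the
  kernel of the symmetric form \<open>h(X,Y) = \<langle>II(X,Y), Z\<^sup>\<perp>\<rangle>\<close>. A symmetric form on a Lorentzian plane
  that kills a null vector \<open>T\<close> is a multiple of \<open>\<langle>T,\<cdot>\<rangle>\<^sup>2\<close>, and evaluating at \<open>W\<close> identifies the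
  multiple: \<open>h(X,Y) = a \<langle>X,Z\<^sup>\<top>\<rangle> \<langle>Y,Z\<^sup>\<top>\<rangle>\<close>. Hence \<open>\<nabla>\<^sub>X Z\<^sup>\<top> = a \<langle>X,Z\<^sup>\<top>\<rangle> Z\<^sup>\<top>\<close>, and one more
  differentiation gives \<open>R(X,Y)Z\<^sup>\<top> = (X(a)\<langle>Y,Z\<^sup>\<top>\<rangle> - Y(a)\<langle>X,Z\<^sup>\<top>\<rangle>) Z\<^sup>\<top>\<close>. Comparing with
  \<open>R(X,Y)Z\<^sup>\<top> = K(\<langle>Y,Z\<^sup>\<top>\<rangle>X - \<langle>X,Z\<^sup>\<top>\<rangle>Y)\<close> yields \<open>K = Z\<^sup>\<top>(a)\<close>. In a chart all of this becomes a computation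
  with the Christoffel symbols of the frame \<open>X\<^sub>0, X\<^sub>1\<close>; Clairaut's theorem supplies the symmetry
  of second and third derivatives.
\<close>

section \<open>Partial derivatives in a chart\<close>

definition coord_line :: "nat \<Rightarrow> real \<times> real \<Rightarrow> real \<Rightarrow> real \<times> real" where
  "coord_line i p s = (if i = 0 then (s, snd p) else (fst p, s))"

definition coord :: "nat \<Rightarrow> real \<times> real \<Rightarrow> real" where
  "coord i p = (if i = 0 then fst p else snd p)"

definition has_partial_deriv ::
    "nat \<Rightarrow> (real \<times> real \<Rightarrow> 'a::real_normed_vector) \<Rightarrow> 'a \<Rightarrow> real \<times> real \<Rightarrow> bool" where
  "has_partial_deriv i F D p \<longleftrightarrow> ((\<lambda>s. F (coord_line i p s)) has_vector_derivative D) (at (coord i p))"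

lemma coord_line_coord [simp]: "coord_line i p (coord i p) = p"
  by (simp add: coord_line_def coord_def)

lemma pd_eq_vector_derivative: "pd i F p = vector_derivative (\<lambda>s. F (coord_line i p s)) (at (coord i p))"
  by (simp add: pd_def coord_line_def coord_def)

lemma pdiffble_iff_differentiable:
  "pdiffble i F p \<longleftrightarrow> (\<lambda>s. F (coord_line i p s)) differentiable (at (coord i p))"
  by (simp add: pdiffble_def coord_line_def coord_def)

lemma has_partial_deriv_0_iff:
  "has_partial_deriv 0 F D q \<longleftrightarrow> ((\<lambda>s. F (s, snd q)) has_vector_derivative D) (at (fst q))"
  by (simp add: has_partial_deriv_def coord_line_def coord_def)

lemma has_partial_deriv_1_iff:
  "has_partial_deriv 1 F D q \<longleftrightarrow> ((\<lambda>t. F (fst q, t)) has_vector_derivative D) (at (snd q))"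
  by (simp add: has_partial_deriv_def coord_line_def coord_def)

lemma has_partial_deriv_pd: "pdiffble i F p \<Longrightarrow> has_partial_deriv i F (pd i F p) p"
  unfolding pdiffble_iff_differentiable has_partial_deriv_def pd_eq_vector_derivative
  by (rule vector_derivative_works[THEN iffD1])

lemma pd_eqI: "has_partial_deriv i F D p \<Longrightarrow> pd i F p = D"
  unfolding has_partial_deriv_def pd_eq_vector_derivative by (rule vector_derivative_at)

lemma has_partial_deriv_imp_pdiffble: "has_partial_deriv i F D p \<Longrightarrow> pdiffble i F p"
  unfolding has_partial_deriv_def pdiffble_iff_differentiable
  by (auto simp: differentiable_def has_vector_derivative_def)

lemma pdiffble_iff_has_partial_deriv: "pdiffble i F p \<longleftrightarrow> (\<exists>D. has_partial_deriv i F D p)"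
  using has_partial_deriv_imp_pdiffble has_partial_deriv_pd by blast

lemma has_partial_deriv_unique: "has_partial_deriv i F D p \<Longrightarrow> has_partial_deriv i F E p \<Longrightarrow> D = E"
  using pd_eqI by metis

lemma has_partial_deriv_transform_open:
  assumes "has_partial_deriv i F D p" "open U" "p \<in> U" "\<And>q. q \<in> U \<Longrightarrow> F q = G q"
  shows "has_partial_deriv i G D p"
proof -
  have "continuous_on UNIV (coord_line i p)"
    unfolding coord_line_def by (cases "i = 0") (auto intro!: continuous_intros)
  then have line_open: "open {s. coord_line i p s \<in> U}"
    using open_vimage[OF assms(2)] by (simp add: vimage_def)
  show ?thesis
    using assms(1) unfolding has_partial_deriv_def
    by (rule has_vector_derivative_transform_within_open[OF _ line_open])
       (use assms in \<open>auto simp: coord_line_def coord_def\<close>)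
qed

lemma pdiffble_transform_open:
  "pdiffble i F p \<Longrightarrow> open U \<Longrightarrow> p \<in> U \<Longrightarrow> (\<And>q. q \<in> U \<Longrightarrow> F q = G q) \<Longrightarrow> pdiffble i G p"
  using has_partial_deriv_transform_open has_partial_deriv_pd has_partial_deriv_imp_pdiffble by metis

lemma pd_transform_open:
  "pdiffble i F p \<Longrightarrow> open U \<Longrightarrow> p \<in> U \<Longrightarrow> (\<And>q. q \<in> U \<Longrightarrow> F q = G q) \<Longrightarrow> pd i G p = pd i F p"
  using has_partial_deriv_transform_open has_partial_deriv_pd pd_eqI by metis

lemma has_partial_deriv_const: "has_partial_deriv i (\<lambda>q. c) 0 p"
  unfolding has_partial_deriv_def by simp

lemma has_partial_deriv_add:
  "has_partial_deriv i F D p \<Longrightarrow> has_partial_deriv i G E p \<Longrightarrow> has_partial_deriv i (\<lambda>q. F q + G q) (D + E) p"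
  unfolding has_partial_deriv_def by (rule has_vector_derivative_add)

lemma has_partial_deriv_diff:
  "has_partial_deriv i F D p \<Longrightarrow> has_partial_deriv i G E p \<Longrightarrow> has_partial_deriv i (\<lambda>q. F q - G q) (D - E) p"
  unfolding has_partial_deriv_def by (rule has_vector_derivative_diff)

lemma has_partial_deriv_minus: "has_partial_deriv i F D p \<Longrightarrow> has_partial_deriv i (\<lambda>q. - F q) (- D) p"
  unfolding has_partial_deriv_def by (rule has_vector_derivative_minus)

lemma has_partial_deriv_sum:
  "(\<And>k. k \<in> I \<Longrightarrow> has_partial_deriv i (F k) (D k) p) \<Longrightarrow>
    has_partial_deriv i (\<lambda>q. \<Sum>k\<in>I. F k q) (\<Sum>k\<in>I. D k) p"
  unfolding has_partial_deriv_def by (rule has_vector_derivative_sum)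

lemma has_partial_deriv_mult:
  fixes F G :: "real \<times> real \<Rightarrow> real"
  shows "has_partial_deriv i F D p \<Longrightarrow> has_partial_deriv i G E p \<Longrightarrow>
    has_partial_deriv i (\<lambda>q. F q * G q) (D * G p + F p * E) p"
  unfolding has_partial_deriv_def
  by (drule (1) has_vector_derivative_mult) (simp add: algebra_simps)

lemma has_partial_deriv_divide:
  fixes F G :: "real \<times> real \<Rightarrow> real"
  shows "has_partial_deriv i F D p \<Longrightarrow> has_partial_deriv i G E p \<Longrightarrow> G p \<noteq> 0 \<Longrightarrow>
    has_partial_deriv i (\<lambda>q. F q / G q) ((D * G p - F p * E) / (G p * G p)) p"
  unfolding has_partial_deriv_def has_real_derivative_iff_has_vector_derivative[symmetric]
  by (drule (1) DERIV_divide) (auto simp: power2_eq_square)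

lemma has_partial_deriv_component:
  "has_partial_deriv i F D p \<Longrightarrow> has_partial_deriv i (\<lambda>q. F q $ k) (D $ k) p"
  unfolding has_partial_deriv_def
  by (rule bounded_linear.has_vector_derivative[OF bounded_linear_vec_nth])

lemma pdiffble_add: "pdiffble i F p \<Longrightarrow> pdiffble i G p \<Longrightarrow> pdiffble i (\<lambda>q. F q + G q) p"
  unfolding pdiffble_iff_has_partial_deriv using has_partial_deriv_add by blast

lemma pdiffble_diff: "pdiffble i F p \<Longrightarrow> pdiffble i G p \<Longrightarrow> pdiffble i (\<lambda>q. F q - G q) p"
  unfolding pdiffble_iff_has_partial_deriv using has_partial_deriv_diff by blast

lemma pdiffble_minus: "pdiffble i F p \<Longrightarrow> pdiffble i (\<lambda>q. - F q) p"
  unfolding pdiffble_iff_has_partial_deriv using has_partial_deriv_minus by blast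

lemma pdiffble_sum: "(\<And>k. k \<in> I \<Longrightarrow> pdiffble i (F k) p) \<Longrightarrow> pdiffble i (\<lambda>q. \<Sum>k\<in>I. F k q) p"
  unfolding pdiffble_iff_has_partial_deriv using has_partial_deriv_sum by metis

lemma pdiffble_mult:
  "pdiffble i (F :: _ \<Rightarrow> real) p \<Longrightarrow> pdiffble i G p \<Longrightarrow> pdiffble i (\<lambda>q. F q * G q) p"
  unfolding pdiffble_iff_has_partial_deriv using has_partial_deriv_mult by blast

lemma pdiffble_divide:
  "pdiffble i (F :: _ \<Rightarrow> real) p \<Longrightarrow> pdiffble i G p \<Longrightarrow> G p \<noteq> 0 \<Longrightarrow> pdiffble i (\<lambda>q. F q / G q) p"
  unfolding pdiffble_iff_has_partial_deriv using has_partial_deriv_divide by blast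

lemma smooth2_pd: "smooth2 F U \<Longrightarrow> i < 2 \<Longrightarrow> smooth2 (pd i F) U"
  unfolding smooth2_def by (metis Ck.simps(2))

lemma smooth2_pdiffble: "smooth2 F U \<Longrightarrow> i < 2 \<Longrightarrow> p \<in> U \<Longrightarrow> pdiffble i F p"
  unfolding smooth2_def by (metis Ck.simps(2))

lemma smooth2_continuous_on: "smooth2 F U \<Longrightarrow> continuous_on U F"
  unfolding smooth2_def by (metis Ck.simps(1))

lemma sum_2: "(\<Sum>l<2. f l) = f 0 + f (1::nat)"
  by (simp add: numeral_2_eq_2)

section \<open>The Minkowski form\<close>

lemma mink_commute: "mink t0 x y = mink t0 y x"
  unfolding mink_def by (simp add: mult.commute)

lemma mink_add_left: "mink t0 (x + y) z = mink t0 x z + mink t0 y z"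
  unfolding mink_def by (simp add: algebra_simps sum.distrib)

lemma mink_add_right: "mink t0 z (x + y) = mink t0 z x + mink t0 z y"
  unfolding mink_def by (simp add: algebra_simps sum.distrib)

lemma mink_scaleR_left: "mink t0 (c *\<^sub>R x) z = c * mink t0 x z"
  unfolding mink_def by (simp add: algebra_simps sum_distrib_left)

lemma mink_scaleR_right: "mink t0 z (c *\<^sub>R x) = c * mink t0 z x"
  unfolding mink_def by (simp add: algebra_simps sum_distrib_left)

lemma mink_diff_left: "mink t0 (x - y) z = mink t0 x z - mink t0 y z"
  unfolding mink_def by (simp add: algebra_simps sum_subtractf)

lemma mink_diff_right: "mink t0 z (x - y) = mink t0 z x - mink t0 z y"
  unfolding mink_def by (simp add: algebra_simps sum_subtractf)

lemma mink_zero_left [simp]: "mink t0 0 z = 0"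
  unfolding mink_def by simp

lemma mink_zero_right [simp]: "mink t0 z 0 = 0"
  unfolding mink_def by simp

lemma mink_sum_left: "mink t0 (\<Sum>k\<in>I. f k) z = (\<Sum>k\<in>I. mink t0 (f k) z)"
  by (induction I rule: infinite_finite_induct) (auto simp: mink_add_left)

lemma mink_sum_right: "mink t0 z (\<Sum>k\<in>I. f k) = (\<Sum>k\<in>I. mink t0 z (f k))"
  by (induction I rule: infinite_finite_induct) (auto simp: mink_add_right)

lemmas mink_linear = mink_add_left mink_add_right mink_scaleR_left mink_scaleR_right
  mink_diff_left mink_diff_right mink_sum_left mink_sum_right

lemma bounded_bilinear_mink: "bounded_bilinear (mink t0)"
proof -
  have "bilinear (mink t0)"
    unfolding bilinear_def by (auto intro!: linearI simp: mink_linear)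
  then show ?thesis by (simp add: bilinear_conv_bounded_bilinear)
qed

lemma has_partial_deriv_mink:
  "has_partial_deriv i F D p \<Longrightarrow> has_partial_deriv i G E p \<Longrightarrow>
    has_partial_deriv i (\<lambda>q. mink t0 (F q) (G q)) (mink t0 D (G p) + mink t0 (F p) E) p"
  unfolding has_partial_deriv_def
  by (drule (1) bounded_bilinear.has_vector_derivative[OF bounded_bilinear_mink]) (simp add: add.commute)

lemma pdiffble_mink: "pdiffble i F p \<Longrightarrow> pdiffble i G p \<Longrightarrow> pdiffble i (\<lambda>q. mink t0 (F q) (G q)) p"
  unfolding pdiffble_iff_has_partial_deriv using has_partial_deriv_mink by blast

section \<open>Clairaut's theorem\<close>

text \<open>Clairaut's theorem, by comparing two applications of the mean value theorem to the
  second difference \<open>F(u+h,v+h) - F(u+h,v) - F(u,v+h) + F(u,v)\<close>.\<close>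

lemma pd_commute_real:
  fixes F Fu Fv Fuv Fvu :: "real \<times> real \<Rightarrow> real"
  assumes U: "open U" "p \<in> U"
    and F_u: "\<And>q. q \<in> U \<Longrightarrow> has_partial_deriv 0 F (Fu q) q"
    and F_v: "\<And>q. q \<in> U \<Longrightarrow> has_partial_deriv 1 F (Fv q) q"
    and F_uv: "\<And>q. q \<in> U \<Longrightarrow> has_partial_deriv 1 Fu (Fuv q) q"
    and F_vu: "\<And>q. q \<in> U \<Longrightarrow> has_partial_deriv 0 Fv (Fvu q) q"
    and cont_uv: "continuous_on U Fuv" and cont_vu: "continuous_on U Fvu"
  shows "Fuv p = Fvu p"
proof (rule ccontr)
  assume ne: "Fuv p \<noteq> Fvu p"
  define e where "e = \<bar>Fuv p - Fvu p\<bar>"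
  have e: "e > 0" using ne by (simp add: e_def)
  obtain u v where p: "p = (u, v)" by (cases p)
  obtain d0 where d0: "d0 > 0" "ball p d0 \<subseteq> U" using U openE by blast
  have "isCont Fuv p" using cont_uv U continuous_on_eq_continuous_at by blast
  then obtain d1 where d1: "d1 > 0" "\<And>y. dist y p < d1 \<Longrightarrow> dist (Fuv y) (Fuv p) < e/2"
    unfolding continuous_at_eps_delta using e by (meson half_gt_zero)
  have "isCont Fvu p" using cont_vu U continuous_on_eq_continuous_at by blast
  then obtain d2 where d2: "d2 > 0" "\<And>y. dist y p < d2 \<Longrightarrow> dist (Fvu y) (Fvu p) < e/2"
    unfolding continuous_at_eps_delta using e by (meson half_gt_zero)
  define d where "d = min d0 (min d1 d2)"
  define h where "h = d/3"
  have h: "h > 0" using d0 d1 d2 by (simp add: h_def d_def)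
  have box: "dist (s, t) p < d" if "u \<le> s" "s \<le> u + h" "v \<le> t" "t \<le> v + h" for s t
  proof -
    have "dist (s, t) p \<le> \<bar>s - u\<bar> + \<bar>t - v\<bar>"
      using sqrt_sum_squares_le_sum_abs by (simp add: p dist_Pair_Pair dist_real_def)
    also have "\<dots> < d" using that h by (simp add: h_def)
    finally show ?thesis .
  qed
  have inU: "(s, t) \<in> U" if "u \<le> s" "s \<le> u + h" "v \<le> t" "t \<le> v + h" for s t
    using box[OF that] d0 by (auto simp: d_def dist_commute subset_eq)
  define \<Delta> where "\<Delta> = F (u+h, v+h) - F (u+h, v) - F (u, v+h) + F (u, v)"
  have "\<exists>z. u < z \<and> z < u + h \<and>
     (F (u+h, v+h) - F (u+h, v)) - (F (u, v+h) - F (u, v)) = ((u+h) - u) * (Fu (z, v+h) - Fu (z, v))"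
  proof (rule MVT2[of u "u+h" "\<lambda>s. F (s, v+h) - F (s, v)"])
    fix x assume "u \<le> x" "x \<le> u + h"
    then have "has_partial_deriv 0 F (Fu (x, v+h)) (x, v+h)" "has_partial_deriv 0 F (Fu (x, v)) (x, v)"
      using F_u inU h by auto
    then show "((\<lambda>s. F (s, v + h) - F (s, v)) has_real_derivative Fu (x, v + h) - Fu (x, v)) (at x)"
      unfolding has_partial_deriv_0_iff has_real_derivative_iff_has_vector_derivative
      by (auto intro!: has_vector_derivative_diff)
  qed (use h in simp)
  then obtain \<xi> where xi: "u < \<xi>" "\<xi> < u + h" "\<Delta> = h * (Fu (\<xi>, v+h) - Fu (\<xi>, v))"
    by (auto simp: \<Delta>_def algebra_simps)
  have "\<exists>z. v < z \<and> z < v + h \<and> Fu (\<xi>, v+h) - Fu (\<xi>, v) = ((v+h) - v) * Fuv (\<xi>, z)"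
  proof (rule MVT2[of v "v+h" "\<lambda>t. Fu (\<xi>, t)"])
    fix x assume "v \<le> x" "x \<le> v + h"
    then have "has_partial_deriv 1 Fu (Fuv (\<xi>, x)) (\<xi>, x)" using F_uv inU xi by auto
    then show "((\<lambda>t. Fu (\<xi>, t)) has_real_derivative Fuv (\<xi>, x)) (at x)"
      unfolding has_partial_deriv_1_iff has_real_derivative_iff_has_vector_derivative by simp
  qed (use h in simp)
  then obtain \<eta> where eta: "v < \<eta>" "\<eta> < v + h" "Fu (\<xi>, v+h) - Fu (\<xi>, v) = h * Fuv (\<xi>, \<eta>)"
    by auto
  have "\<exists>z. v < z \<and> z < v + h \<and>
     (F (u+h, v+h) - F (u, v+h)) - (F (u+h, v) - F (u, v)) = ((v+h) - v) * (Fv (u+h, z) - Fv (u, z))"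
  proof (rule MVT2[of v "v+h" "\<lambda>t. F (u+h, t) - F (u, t)"])
    fix x assume "v \<le> x" "x \<le> v + h"
    then have "has_partial_deriv 1 F (Fv (u+h, x)) (u+h, x)" "has_partial_deriv 1 F (Fv (u, x)) (u, x)"
      using F_v inU h by auto
    then show "((\<lambda>t. F (u+h, t) - F (u, t)) has_real_derivative Fv (u+h, x) - Fv (u, x)) (at x)"
      unfolding has_partial_deriv_1_iff has_real_derivative_iff_has_vector_derivative
      by (auto intro!: has_vector_derivative_diff)
  qed (use h in simp)
  then obtain \<eta>' where eta': "v < \<eta>'" "\<eta>' < v + h" "\<Delta> = h * (Fv (u+h, \<eta>') - Fv (u, \<eta>'))"
    by (auto simp: \<Delta>_def algebra_simps)
  have "\<exists>z. u < z \<and> z < u + h \<and> Fv (u+h, \<eta>') - Fv (u, \<eta>') = ((u+h) - u) * Fvu (z, \<eta>')"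
  proof (rule MVT2[of u "u+h" "\<lambda>s. Fv (s, \<eta>')"])
    fix x assume "u \<le> x" "x \<le> u + h"
    then have "has_partial_deriv 0 Fv (Fvu (x, \<eta>')) (x, \<eta>')" using F_vu inU eta' by auto
    then show "((\<lambda>s. Fv (s, \<eta>')) has_real_derivative Fvu (x, \<eta>')) (at x)"
      unfolding has_partial_deriv_0_iff has_real_derivative_iff_has_vector_derivative by simp
  qed (use h in simp)
  then obtain \<xi>' where xi': "u < \<xi>'" "\<xi>' < u + h" "Fv (u+h, \<eta>') - Fv (u, \<eta>') = h * Fvu (\<xi>', \<eta>')"
    by auto
  have "\<Delta> = h * (h * Fuv (\<xi>, \<eta>))" "\<Delta> = h * (h * Fvu (\<xi>', \<eta>'))"
    using xi(3) eta(3) eta'(3) xi'(3) by simp_all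
  then have eq: "Fuv (\<xi>, \<eta>) = Fvu (\<xi>', \<eta>')" using h by auto
  have "dist (Fuv (\<xi>, \<eta>)) (Fuv p) < e/2"
    using d1(2) box[of \<xi> \<eta>] xi eta by (auto simp: d_def)
  moreover have "dist (Fvu (\<xi>', \<eta>')) (Fvu p) < e/2"
    using d2(2) box[of \<xi>' \<eta>'] xi' eta' by (auto simp: d_def)
  ultimately have "e < e" using eq unfolding e_def dist_real_def by (simp add: abs_if split: if_splits)
  then show False by simp
qed

lemma pd_commute:
  fixes F :: "real \<times> real \<Rightarrow> real^'m"
  assumes "open U" "p \<in> U" "smooth2 F U" "i < 2" "j < 2"
  shows "pd i (pd j F) p = pd j (pd i F) p"
proof -
  have F0: "smooth2 (pd 0 F) U" and F1: "smooth2 (pd 1 F) U"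
    using smooth2_pd[OF assms(3)] by auto
  have "pd 1 (pd 0 F) p $ k = pd 0 (pd 1 F) p $ k" for k
  proof (rule pd_commute_real[OF assms(1,2), where F="\<lambda>q. F q $ k" and Fu="\<lambda>q. pd 0 F q $ k"
        and Fv="\<lambda>q. pd 1 F q $ k"])
    fix q assume "q \<in> U"
    then show "has_partial_deriv 0 (\<lambda>q. F q $ k) (pd 0 F q $ k) q"
      and "has_partial_deriv 1 (\<lambda>q. F q $ k) (pd 1 F q $ k) q"
      and "has_partial_deriv 1 (\<lambda>q. pd 0 F q $ k) (pd 1 (pd 0 F) q $ k) q"
      and "has_partial_deriv 0 (\<lambda>q. pd 1 F q $ k) (pd 0 (pd 1 F) q $ k) q"
      using assms(3) F0 F1
      by (auto intro!: has_partial_deriv_component has_partial_deriv_pd smooth2_pdiffble)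
  next
    show "continuous_on U (\<lambda>q. pd 1 (pd 0 F) q $ k)" "continuous_on U (\<lambda>q. pd 0 (pd 1 F) q $ k)"
      using smooth2_continuous_on[OF smooth2_pd[OF F0]] smooth2_continuous_on[OF smooth2_pd[OF F1]]
      by (auto intro!: continuous_intros)
  qed
  then have "pd 1 (pd 0 F) p = pd 0 (pd 1 F) p" by (simp add: vec_eq_iff)
  then show ?thesis using assms(4,5) by (cases i; cases j) (auto simp: less_Suc_eq)
qed

section \<open>Identities of two-dimensional linear algebra\<close>

text \<open>A symmetric form on a plane that kills a nonzero vector \<open>c\<close> is a multiple of \<open>z \<otimes> z\<close>
  for any \<open>z\<close> annihilating \<open>c\<close>; the multiple is read off at a vector \<open>w\<close> with \<open>w \<cdot> z = -1\<close>.\<close>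

lemma symmetric_rank_one_of_kernel:
  fixes H00 H01 H11 c0 c1 z0 z1 w0 w1 a :: real
  assumes "H00 * c0 + H01 * c1 = 0" "H01 * c0 + H11 * c1 = 0"
    and "z0 * c0 + z1 * c1 = 0" "c0 \<noteq> 0 \<or> c1 \<noteq> 0"
    and "w0 * z0 + w1 * z1 = -1"
    and "a = w0 * w0 * H00 + 2 * w0 * w1 * H01 + w1 * w1 * H11"
  shows "H00 = a * z0 * z0" "H01 = a * z0 * z1" "H11 = a * z1 * z1"
  using assms by algebra+

text \<open>Here \<open>S\<close> is \<open>R\<^sub>0\<^sub>1\<^sub>0\<^sub>1 = K det g\<close>, \<open>c = g\<^sup>-\<^sup>1z\<close> is the null vector \<open>Z\<^sup>\<top>\<close>, and \<open>h1\<close>, \<open>h2\<close> are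
  the contraction of the curvature tensor with \<open>Z\<^sup>\<top>\<close> in coordinates.\<close>

lemma curvature_from_null_contraction_alg:
  fixes g00 g01 g11 z0 z1 S a0 a1 c0 c1 dt :: real
  assumes "dt = g00 * g11 - g01 * g01" "dt \<noteq> 0"
    and "c0 * dt = g11 * z0 - g01 * z1" "c1 * dt = g00 * z1 - g01 * z0"
    and h1: "c0 * S = z1 * (a1 * z0 - a0 * z1)" and h2: "c1 * S = - z0 * (a1 * z0 - a0 * z1)"
    and "g11 * z0 * z0 - 2 * g01 * z0 * z1 + g00 * z1 * z1 = 0"
    and "z0 \<noteq> 0 \<or> z1 \<noteq> 0"
  shows "S = dt * (c0 * a0 + c1 * a1)"
  using assms by algebra

text \<open>\<open>G\<close>, \<open>D\<close>, \<open>zz\<close>, \<open>zzz\<close> stand for \<open>\<Gamma>\<^sup>m\<^sub>i\<^sub>j\<close>, \<open>\<partial>\<^sub>k\<Gamma>\<^sup>m\<^sub>i\<^sub>j\<close>, \<open>\<langle>Z, X\<^sub>i\<^sub>j\<rangle>\<close>, \<open>\<langle>Z, X\<^sub>k\<^sub>i\<^sub>j\<rangle>\<close>;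
  \<open>zz\<close> is the rank-one normal part plus the tangential part of \<open>X\<^sub>i\<^sub>j\<close>, and \<open>D\<close> its derivative.\<close>

lemma riemann_contraction_alg:
  fixes z ad :: "nat \<Rightarrow> real" and a :: real and zz :: "nat \<Rightarrow> nat \<Rightarrow> real"
    and zzz G :: "nat \<Rightarrow> nat \<Rightarrow> nat \<Rightarrow> real" and D :: "nat \<Rightarrow> nat \<Rightarrow> nat \<Rightarrow> nat \<Rightarrow> real"
  assumes i: "i < 2" and zzz_commute: "zzz 0 1 i = zzz 1 0 i"
    and G_commute: "\<And>m i j. m < 2 \<Longrightarrow> i < 2 \<Longrightarrow> j < 2 \<Longrightarrow> G m i j = G m j i"
    and zz: "\<And>i j. i < 2 \<Longrightarrow> j < 2 \<Longrightarrow> zz i j = a * z i * z j + (\<Sum>m<2. G m i j * z m)"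
    and D: "\<And>k i j. k < 2 \<Longrightarrow> i < 2 \<Longrightarrow> j < 2 \<Longrightarrow>
      (\<Sum>m<2. D k m i j * z m) = zzz k i j - (\<Sum>m<2. G m i j * zz k m)
        - (ad k * z i * z j + a * (zz k i * z j + z i * zz k j))"
  shows "(\<Sum>n<2. z n * (D 0 n 1 i - D 1 n 0 i + (\<Sum>m<2. G n 0 m * G m 1 i - G n 1 m * G m 0 i)))
    = z i * (ad 1 * z 0 - ad 0 * z 1)"
proof -
  have "(\<Sum>n<2. z n * (D 0 n 1 i - D 1 n 0 i + (\<Sum>m<2. G n 0 m * G m 1 i - G n 1 m * G m 0 i)))
     = (\<Sum>m<2. D 0 m 1 i * z m) - (\<Sum>m<2. D 1 m 0 i * z m)
       + (\<Sum>n<2. z n * (\<Sum>m<2. G n 0 m * G m 1 i - G n 1 m * G m 0 i))"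
    by (simp add: sum_2 algebra_simps)
  moreover have "(\<Sum>m<2. D 0 m 1 i * z m) = zzz 0 1 i - (\<Sum>m<2. G m 1 i * zz 0 m)
      - (ad 0 * z 1 * z i + a * (zz 0 1 * z i + z 1 * zz 0 i))"
    and "(\<Sum>m<2. D 1 m 0 i * z m) = zzz 1 0 i - (\<Sum>m<2. G m 0 i * zz 1 m)
      - (ad 1 * z 0 * z i + a * (zz 1 0 * z i + z 0 * zz 1 i))"
    using D[of 0 1 i] D[of 1 0 i] i by simp_all
  moreover have "\<And>i j. i < 2 \<Longrightarrow> j < 2 \<Longrightarrow> zz i j = a * z i * z j + (G 0 i j * z 0 + G 1 i j * z 1)"
    using zz by (simp add: sum_2)
  ultimately show ?thesis
    using zzz_commute G_commute i by (auto simp: sum_2 algebra_simps less_Suc_eq numeral_2_eq_2)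
qed

text \<open>\<open>g\<close>, \<open>gi\<close>, \<open>G\<close>, \<open>D\<close> stand for \<open>g\<^sub>i\<^sub>j\<close>, \<open>g\<^sup>i\<^sup>j\<close>, \<open>\<Gamma>\<^sup>l\<^sub>i\<^sub>j\<close>, \<open>\<partial>\<^sub>k\<Gamma>\<^sup>l\<^sub>i\<^sub>j\<close>, and \<open>P\<close>, \<open>Q\<close>, \<open>T\<close> for
  \<open>\<langle>X\<^sub>i\<^sub>j, X\<^sub>l\<rangle>\<close>, \<open>\<langle>X\<^sub>i\<^sub>j, X\<^sub>k\<^sub>l\<rangle>\<close>, \<open>\<langle>X\<^sub>k\<^sub>i\<^sub>j, X\<^sub>n\<rangle>\<close>; by Clairaut these depend on each multi-index
  only through its sum.\<close>

lemma riemann_lowered_antisym_alg: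
  fixes g gi :: "nat \<Rightarrow> nat \<Rightarrow> real" and P :: "nat \<Rightarrow> nat \<Rightarrow> nat \<Rightarrow> real"
    and Q T :: "nat \<Rightarrow> nat \<Rightarrow> nat \<Rightarrow> nat \<Rightarrow> real"
    and G :: "nat \<Rightarrow> nat \<Rightarrow> nat \<Rightarrow> real" and D :: "nat \<Rightarrow> nat \<Rightarrow> nat \<Rightarrow> nat \<Rightarrow> real"
    and pp qq tt :: "nat \<Rightarrow> nat \<Rightarrow> real"
  assumes gi: "gi 0 1 = gi 1 0"
    and P: "\<And>i j l. i < 2 \<Longrightarrow> j < 2 \<Longrightarrow> P i j l = pp (i + j) l"
    and Q: "\<And>i j k l. i < 2 \<Longrightarrow> j < 2 \<Longrightarrow> k < 2 \<Longrightarrow> l < 2 \<Longrightarrow> Q i j k l = qq (i + j) (k + l)"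
    and qq: "\<And>a b. qq a b = qq b a"
    and T: "\<And>k i j n. k < 2 \<Longrightarrow> i < 2 \<Longrightarrow> j < 2 \<Longrightarrow> T k i j n = tt (k + i + j) n"
    and G: "\<And>l i j. l < 2 \<Longrightarrow> i < 2 \<Longrightarrow> j < 2 \<Longrightarrow> G l i j = (\<Sum>m<2. gi l m * P i j m)"
    and gG: "\<And>n i j. n < 2 \<Longrightarrow> i < 2 \<Longrightarrow> j < 2 \<Longrightarrow> (\<Sum>l<2. g n l * G l i j) = P i j n"
    and gD: "\<And>k n i j. k < 2 \<Longrightarrow> n < 2 \<Longrightarrow> i < 2 \<Longrightarrow> j < 2 \<Longrightarrow>
      (\<Sum>l<2. g n l * D k l i j) = T k i j n + Q i j k n - (\<Sum>l<2. (P k n l + P k l n) * G l i j)"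
    and n: "n < 2" and i: "i < 2"
  shows "(\<Sum>l<2. g n l * (D 0 l 1 i - D 1 l 0 i + (\<Sum>m<2. G l 0 m * G m 1 i - G l 1 m * G m 0 i)))
       = - (\<Sum>l<2. g i l * (D 0 l 1 n - D 1 l 0 n + (\<Sum>m<2. G l 0 m * G m 1 n - G l 1 m * G m 0 n)))"
proof -
  have expand: "(\<Sum>l<2. g n l * (D 0 l 1 i - D 1 l 0 i + (\<Sum>m<2. G l 0 m * G m 1 i - G l 1 m * G m 0 i)))
    = (T 0 1 i n + Q 1 i 0 n - (\<Sum>l<2. (P 0 n l + P 0 l n) * G l 1 i))
      - (T 1 0 i n + Q 0 i 1 n - (\<Sum>l<2. (P 1 n l + P 1 l n) * G l 0 i))
      + (\<Sum>m<2. P 0 m n * G m 1 i - P 1 m n * G m 0 i)" if n: "n < 2" and i: "i < 2" for n i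
  proof -
    have "(\<Sum>l<2. g n l * (D 0 l 1 i - D 1 l 0 i + (\<Sum>m<2. G l 0 m * G m 1 i - G l 1 m * G m 0 i)))
      = (\<Sum>l<2. g n l * D 0 l 1 i) - (\<Sum>l<2. g n l * D 1 l 0 i)
        + (\<Sum>m<2. (\<Sum>l<2. g n l * G l 0 m) * G m 1 i - (\<Sum>l<2. g n l * G l 1 m) * G m 0 i)"
      by (simp add: sum_2 algebra_simps)
    also have "(\<Sum>m<2. (\<Sum>l<2. g n l * G l 0 m) * G m 1 i - (\<Sum>l<2. g n l * G l 1 m) * G m 0 i)
          = (\<Sum>m<2. P 0 m n * G m 1 i - P 1 m n * G m 0 i)"
      by (rule sum.cong) (auto simp: gG n)
    finally show ?thesis using gD[of 0 n 1 i] gD[of 1 n 0 i] n i by simp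
  qed
  show ?thesis unfolding expand[OF n i] expand[OF i n]
    using n i by (auto simp: sum_2 G P Q T less_Suc_eq numeral_2_eq_2 algebra_simps gi[simplified] qq)
qed

text \<open>The derivative of \<open>det g \<cdot> \<langle>Z\<^sup>\<top>, Z\<^sup>\<top>\<rangle> = 0\<close> in direction \<open>k\<close>, with \<open>p\<^sub>i\<^sub>j = \<langle>X\<^sub>k\<^sub>i, X\<^sub>j\<rangle>\<close>,
  \<open>y\<^sub>j = \<langle>Z, X\<^sub>k\<^sub>j\<rangle>\<close> and \<open>e = 1/det g\<close>; the conclusion is \<open>\<Sum>\<^sub>j c\<^sup>j h\<^sub>k\<^sub>j = 0\<close> written out.\<close>

lemma null_form_deriv_alg:
  fixes g00 g01 g11 p00 p01 p10 p11 z0 z1 y0 y1 e :: real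
  assumes "e * (g00 * g11 - g01 * g01) = 1"
    and "g11 * z0 * z0 - 2 * g01 * z0 * z1 + g00 * z1 * z1 = 0"
    and "(p11 + p11) * z0 * z0 + g11 * (y0 * z0 + z0 * y0) - 2 * ((p01 + p10) * z0 * z1 + g01 * (y0 * z1 + z0 * y1))
      + (p00 + p00) * z1 * z1 + g00 * (y1 * z1 + z1 * y1) = 0"
  shows "((g11 * e) * z0 + (- g01 * e) * z1) * (y0 - (((g11 * e) * p00 + (- g01 * e) * p01) * z0 + ((- g01 * e) * p00 + (g00 * e) * p01) * z1))
       + ((- g01 * e) * z0 + (g00 * e) * z1) * (y1 - (((g11 * e) * p10 + (- g01 * e) * p11) * z0 + ((- g01 * e) * p10 + (g00 * e) * p11) * z1)) = 0"
  using assms by algebra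

section \<open>Nondegenerate charts\<close>

lemma gm_commute: "gm t0 X i j q = gm t0 X j i q"
  by (simp add: gm_def mink_commute)

lemma christoffel_commute: "christoffel t0 X m i j q = christoffel t0 X m j i q"
proof -
  have "gm t0 X i j = gm t0 X j i" by (rule ext) (rule gm_commute)
  then show ?thesis unfolding christoffel_def by (simp add: algebra_simps)
qed

definition zcoef :: "'m::finite \<Rightarrow> (real \<times> real \<Rightarrow> real^'m) \<Rightarrow> real^'m \<Rightarrow> nat \<Rightarrow> real \<times> real \<Rightarrow> real" where
  "zcoef t0 X Z i q = mink t0 Z (pd i X q)"

text \<open>The coefficients \<open>\<langle>II(\<partial>\<^sub>i, \<partial>\<^sub>j), Z\<^sup>\<perp>\<rangle>\<close>, see \<open>mink_norpart_pd_pd\<close>.\<close>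

definition sff_coef ::
    "'m::finite \<Rightarrow> (real \<times> real \<Rightarrow> real^'m) \<Rightarrow> real^'m \<Rightarrow> nat \<Rightarrow> nat \<Rightarrow> real \<times> real \<Rightarrow> real" where
  "sff_coef t0 X Z i j q =
    mink t0 Z (pd i (pd j X) q) - (\<Sum>m<2. christoffel t0 X m i j q * zcoef t0 X Z m q)"

text \<open>\<open>det g \<cdot> \<langle>Z\<^sup>\<top>, Z\<^sup>\<top>\<rangle>\<close> as a polynomial in \<open>g\<close> and \<open>z\<close>, see \<open>gdet_tan_norm_eq\<close>.\<close>

definition gdet_tan_norm :: "'m::finite \<Rightarrow> (real \<times> real \<Rightarrow> real^'m) \<Rightarrow> real^'m \<Rightarrow> real \<times> real \<Rightarrow> real" where
  "gdet_tan_norm t0 X Z q =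
    gm t0 X 1 1 q * zcoef t0 X Z 0 q * zcoef t0 X Z 0 q
    - 2 * gm t0 X 0 1 q * zcoef t0 X Z 0 q * zcoef t0 X Z 1 q
    + gm t0 X 0 0 q * zcoef t0 X Z 1 q * zcoef t0 X Z 1 q"

lemma tcoef_eq_zcoef: "tcoef t0 X Z i q = (\<Sum>j<2. ginv t0 X i j q * zcoef t0 X Z j q)"
  by (simp add: tcoef_def zcoef_def)

lemma tcoef_nonzero_if_tanpart_nonzero:
  "tanpart t0 X Z q \<noteq> 0 \<Longrightarrow> tcoef t0 X Z 0 q \<noteq> 0 \<or> tcoef t0 X Z 1 q \<noteq> 0"
  by (auto simp: tanpart_def sum_2)

lemma zcoef_nonzero_if_tanpart_nonzero:
  "tanpart t0 X Z q \<noteq> 0 \<Longrightarrow> zcoef t0 X Z 0 q \<noteq> 0 \<or> zcoef t0 X Z 1 q \<noteq> 0"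
  by (auto simp: tanpart_def sum_2 tcoef_eq_zcoef)

locale nondegenerate_chart =
  fixes t0 :: "'m::finite" and X :: "real \<times> real \<Rightarrow> real^'m" and U :: "(real \<times> real) set"
  assumes open_U: "open U" and smooth: "smooth2 X U"
    and gdet_nonzero: "\<And>q. q \<in> U \<Longrightarrow> gdet t0 X q \<noteq> 0"
begin

lemma smooth_pd: "i < 2 \<Longrightarrow> smooth2 (pd i X) U"
  using smooth2_pd[OF smooth] .

lemma pdiffble_pd: "k < 2 \<Longrightarrow> i < 2 \<Longrightarrow> q \<in> U \<Longrightarrow> pdiffble k (pd i X) q"
  using smooth2_pdiffble smooth_pd by blast

lemma pdiffble_pd_pd: "k < 2 \<Longrightarrow> i < 2 \<Longrightarrow> j < 2 \<Longrightarrow> q \<in> U \<Longrightarrow> pdiffble k (pd i (pd j X)) q"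
  using smooth2_pdiffble smooth2_pd smooth_pd by blast

lemma pd_pd_commute: "q \<in> U \<Longrightarrow> i < 2 \<Longrightarrow> j < 2 \<Longrightarrow> pd i (pd j X) q = pd j (pd i X) q"
  using pd_commute[OF open_U _ smooth] by blast

lemma pd_pd_pd_commute_inner:
  "q \<in> U \<Longrightarrow> k < 2 \<Longrightarrow> i < 2 \<Longrightarrow> j < 2 \<Longrightarrow> pd k (pd i (pd j X)) q = pd k (pd j (pd i X)) q"
  by (rule pd_transform_open[OF pdiffble_pd_pd open_U]) (auto simp: pd_pd_commute)

lemma pd_pd_pd_commute_outer:
  "q \<in> U \<Longrightarrow> k < 2 \<Longrightarrow> i < 2 \<Longrightarrow> j < 2 \<Longrightarrow> pd k (pd i (pd j X)) q = pd i (pd k (pd j X)) q"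
  using pd_commute[OF open_U _ smooth_pd] by blast

lemma has_partial_deriv_gm:
  "q \<in> U \<Longrightarrow> k < 2 \<Longrightarrow> i < 2 \<Longrightarrow> j < 2 \<Longrightarrow> has_partial_deriv k (gm t0 X i j)
    (mink t0 (pd k (pd i X) q) (pd j X q) + mink t0 (pd i X q) (pd k (pd j X) q)) q"
  unfolding gm_def[abs_def] by (intro has_partial_deriv_mink has_partial_deriv_pd pdiffble_pd)

lemma pd_gm: "q \<in> U \<Longrightarrow> k < 2 \<Longrightarrow> i < 2 \<Longrightarrow> j < 2 \<Longrightarrow>
  pd k (gm t0 X i j) q = mink t0 (pd k (pd i X) q) (pd j X q) + mink t0 (pd i X q) (pd k (pd j X) q)"
  using pd_eqI[OF has_partial_deriv_gm] .

lemma pdiffble_gm: "q \<in> U \<Longrightarrow> k < 2 \<Longrightarrow> i < 2 \<Longrightarrow> j < 2 \<Longrightarrow> pdiffble k (gm t0 X i j) q"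
  using has_partial_deriv_imp_pdiffble[OF has_partial_deriv_gm] .

lemma pdiffble_gdet: "q \<in> U \<Longrightarrow> k < 2 \<Longrightarrow> pdiffble k (gdet t0 X) q"
  unfolding gdet_def[abs_def] by (intro pdiffble_diff pdiffble_mult pdiffble_gm) auto

lemma pdiffble_ginv:
  assumes "q \<in> U" "k < 2" "m < 2" "l < 2"
  shows "pdiffble k (ginv t0 X m l) q"
proof -
  have "pdiffble k (\<lambda>q. if m = 0 \<and> l = 0 then gm t0 X 1 1 q
      else if m = 1 \<and> l = 1 then gm t0 X 0 0 q else - gm t0 X m l q) q"
    using assms by (cases "m = 0 \<and> l = 0"; cases "m = 1 \<and> l = 1") (auto intro!: pdiffble_minus pdiffble_gm)
  then have "pdiffble k (\<lambda>q. (if m = 0 \<and> l = 0 then gm t0 X 1 1 q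
      else if m = 1 \<and> l = 1 then gm t0 X 0 0 q else - gm t0 X m l q) / gdet t0 X q) q"
    using assms by (intro pdiffble_divide pdiffble_gdet gdet_nonzero)
  moreover have "ginv t0 X m l = (\<lambda>q. (if m = 0 \<and> l = 0 then gm t0 X 1 1 q
      else if m = 1 \<and> l = 1 then gm t0 X 0 0 q else - gm t0 X m l q) / gdet t0 X q)"
    by (auto simp: ginv_def)
  ultimately show ?thesis by simp
qed

lemma christoffel_eq:
  assumes "q \<in> U" "i < 2" "j < 2"
  shows "christoffel t0 X m i j q = (\<Sum>l<2. ginv t0 X m l q * mink t0 (pd i (pd j X) q) (pd l X q))"
  unfolding christoffel_def sum_distrib_left
proof (rule sum.cong[OF refl])
  fix l assume "l \<in> {..<2::nat}"
  with assms show "1 / 2 * (ginv t0 X m l q * (pd i (gm t0 X j l) q + pd j (gm t0 X i l) q - pd l (gm t0 X i j) q))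
      = ginv t0 X m l q * mink t0 (pd i (pd j X) q) (pd l X q)"
    by (simp add: pd_gm pd_pd_commute[of q i j] pd_pd_commute[of q i l] pd_pd_commute[of q j l]
        mink_commute algebra_simps)
qed

lemma pdiffble_christoffel:
  assumes "q \<in> U" "k < 2" "m < 2" "i < 2" "j < 2"
  shows "pdiffble k (christoffel t0 X m i j) q"
proof -
  have "pdiffble k (\<lambda>q. \<Sum>l<2. ginv t0 X m l q * mink t0 (pd i (pd j X) q) (pd l X q)) q"
    using assms by (auto intro!: pdiffble_sum pdiffble_mult pdiffble_mink pdiffble_ginv pdiffble_pd_pd pdiffble_pd)
  then show ?thesis
    by (rule pdiffble_transform_open[OF _ open_U \<open>q \<in> U\<close>]) (use assms christoffel_eq in auto)
qed

lemma gm_ginv_sum: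
  assumes "q \<in> U" "n < 2"
  shows "(\<Sum>l<2. gm t0 X n l q * (\<Sum>m<2. ginv t0 X l m q * v m)) = v n"
proof -
  have g10: "gm t0 X 1 0 q = gm t0 X 0 1 q" by (rule gm_commute)
  have d: "gdet t0 X q \<noteq> 0" using gdet_nonzero[OF assms(1)] .
  from assms(2) consider "n = 0" | "n = 1" by linarith
  then show ?thesis
  proof cases
    case 1
    with d show ?thesis
      by (simp add: sum_2 ginv_def g10 field_simps) (simp add: gdet_def g10 algebra_simps)
  next
    case 2
    with d show ?thesis
      by (simp add: sum_2 ginv_def g10 field_simps) (simp add: gdet_def g10 algebra_simps)
  qed
qed

lemma ginv_gm_sum: "q \<in> U \<Longrightarrow> n < 2 \<Longrightarrow> (\<Sum>l<2. (\<Sum>m<2. ginv t0 X l m q * v m) * gm t0 X l n q) = v n"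
  using gm_ginv_sum[of q n v] by (simp add: gm_commute[of t0 X _ n] mult.commute)

lemma gm_christoffel_sum: "q \<in> U \<Longrightarrow> n < 2 \<Longrightarrow> i < 2 \<Longrightarrow> j < 2 \<Longrightarrow>
  (\<Sum>l<2. gm t0 X n l q * christoffel t0 X l i j q) = mink t0 (pd i (pd j X) q) (pd n X q)"
  by (simp add: christoffel_eq gm_ginv_sum)

lemma pd_gm_christoffel_sum:
  assumes p: "p \<in> U" "k < 2" "n < 2" "i < 2" "j < 2"
  shows "(\<Sum>l<2. pd k (gm t0 X n l) p * christoffel t0 X l i j p + gm t0 X n l p * pd k (christoffel t0 X l i j) p)
    = mink t0 (pd k (pd i (pd j X)) p) (pd n X p) + mink t0 (pd i (pd j X) p) (pd k (pd n X) p)"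
proof -
  have "has_partial_deriv k (\<lambda>q. \<Sum>l<2. gm t0 X n l q * christoffel t0 X l i j q)
    (\<Sum>l<2. pd k (gm t0 X n l) p * christoffel t0 X l i j p + gm t0 X n l p * pd k (christoffel t0 X l i j) p) p"
    using p by (intro has_partial_deriv_sum has_partial_deriv_mult has_partial_deriv_pd pdiffble_gm pdiffble_christoffel) auto
  then have "has_partial_deriv k (\<lambda>q. mink t0 (pd i (pd j X) q) (pd n X q))
    (\<Sum>l<2. pd k (gm t0 X n l) p * christoffel t0 X l i j p + gm t0 X n l p * pd k (christoffel t0 X l i j) p) p"
    by (rule has_partial_deriv_transform_open[OF _ open_U p(1)]) (use gm_christoffel_sum p in auto)
  moreover have "has_partial_deriv k (\<lambda>q. mink t0 (pd i (pd j X) q) (pd n X q))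
    (mink t0 (pd k (pd i (pd j X)) p) (pd n X p) + mink t0 (pd i (pd j X) p) (pd k (pd n X) p)) p"
    using p by (intro has_partial_deriv_mink has_partial_deriv_pd pdiffble_pd_pd pdiffble_pd)
  ultimately show ?thesis by (rule has_partial_deriv_unique)
qed

lemma riemann_lowered_antisym:
  assumes p: "p \<in> U" and n: "n < 2" and i: "i < 2"
  shows "(\<Sum>l<2. gm t0 X n l p * riemann t0 X l 0 1 i p) = - (\<Sum>l<2. gm t0 X i l p * riemann t0 X l 0 1 n p)"
proof -
  define G where "G = (\<lambda>m i j. christoffel t0 X m i j p)"
  define D where "D = (\<lambda>k m i j. pd k (christoffel t0 X m i j) p)"
  define X2 where "X2 = (\<lambda>s::nat. if s = 0 then pd 0 (pd 0 X) p
    else if s = 1 then pd 0 (pd 1 X) p else pd 1 (pd 1 X) p)"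
  define X3 where "X3 = (\<lambda>s::nat. if s = 0 then pd 0 (pd 0 (pd 0 X)) p
    else if s = 1 then pd 0 (pd 0 (pd 1 X)) p
    else if s = 2 then pd 0 (pd 1 (pd 1 X)) p else pd 1 (pd 1 (pd 1 X)) p)"
  have X2: "pd i (pd j X) p = X2 (i + j)" if "i < 2" "j < 2" for i j
    using that pd_pd_commute[OF p, of 1 0] by (auto simp: X2_def less_Suc_eq numeral_2_eq_2)
  have X3: "pd k (pd i (pd j X)) p = X3 (k + i + j)" if "k < 2" "i < 2" "j < 2" for k i j
    using that pd_pd_pd_commute_inner[OF p, of 0 1 0] pd_pd_pd_commute_outer[OF p, of 1 0 0]
      pd_pd_pd_commute_outer[OF p, of 1 0 1] pd_pd_pd_commute_inner[OF p, of 1 1 0]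
    by (auto simp: X3_def less_Suc_eq numeral_2_eq_2)
  have gD: "(\<Sum>l<2. gm t0 X n l p * D k l i j)
       = mink t0 (pd k (pd i (pd j X)) p) (pd n X p) + mink t0 (pd i (pd j X) p) (pd k (pd n X) p)
         - (\<Sum>l<2. (mink t0 (pd k (pd n X) p) (pd l X p) + mink t0 (pd k (pd l X) p) (pd n X p)) * G l i j)"
    if "k < 2" "n < 2" "i < 2" "j < 2" for k n i j
  proof -
    have "pd k (gm t0 X n l) p = mink t0 (pd k (pd n X) p) (pd l X p) + mink t0 (pd k (pd l X) p) (pd n X p)"
      if "l < 2" for l
      using pd_gm[OF p \<open>k < 2\<close> \<open>n < 2\<close> that] by (simp add: mink_commute[of t0 "pd n X p"])
    then show ?thesis
      using pd_gm_christoffel_sum[OF p that] unfolding G_def D_def by (simp add: sum_2 algebra_simps)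
  qed
  have "riemann t0 X l 0 1 i p = D 0 l 1 i - D 1 l 0 i + (\<Sum>m<2. G l 0 m * G m 1 i - G l 1 m * G m 0 i)"
    for l i
    by (simp add: riemann_def D_def G_def)
  moreover have "(\<Sum>l<2. gm t0 X n l p * (D 0 l 1 i - D 1 l 0 i + (\<Sum>m<2. G l 0 m * G m 1 i - G l 1 m * G m 0 i)))
    = - (\<Sum>l<2. gm t0 X i l p * (D 0 l 1 n - D 1 l 0 n + (\<Sum>m<2. G l 0 m * G m 1 n - G l 1 m * G m 0 n)))"
  proof (rule riemann_lowered_antisym_alg[where gi="\<lambda>l m. ginv t0 X l m p"
        and P="\<lambda>i j l. mink t0 (pd i (pd j X) p) (pd l X p)"
        and Q="\<lambda>i j k l. mink t0 (pd i (pd j X) p) (pd k (pd l X) p)"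
        and T="\<lambda>k i j n. mink t0 (pd k (pd i (pd j X)) p) (pd n X p)"
        and pp="\<lambda>s l. mink t0 (X2 s) (pd l X p)" and qq="\<lambda>s t. mink t0 (X2 s) (X2 t)"
        and tt="\<lambda>s n. mink t0 (X3 s) (pd n X p)", OF _ _ _ _ _ _ _ gD n i])
    show "ginv t0 X 0 1 p = ginv t0 X 1 0 p" by (simp add: ginv_def gm_commute[of t0 X 0 "Suc 0"])
    show "\<And>a b. mink t0 (X2 a) (X2 b) = mink t0 (X2 b) (X2 a)" by (rule mink_commute)
    show "\<And>l i j. l < 2 \<Longrightarrow> i < 2 \<Longrightarrow> j < 2 \<Longrightarrow>
      G l i j = (\<Sum>m<2. ginv t0 X l m p * mink t0 (pd i (pd j X) p) (pd m X p))"
      unfolding G_def using christoffel_eq[OF p] by blast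
    show "\<And>n i j. n < 2 \<Longrightarrow> i < 2 \<Longrightarrow> j < 2 \<Longrightarrow>
      (\<Sum>l<2. gm t0 X n l p * G l i j) = mink t0 (pd i (pd j X) p) (pd n X p)"
      unfolding G_def using gm_christoffel_sum[OF p] by blast
  qed (simp_all add: X2 X3)
  ultimately show ?thesis by simp
qed

lemma mink_norpart_pd: "q \<in> U \<Longrightarrow> l < 2 \<Longrightarrow> mink t0 (norpart t0 X V q) (pd l X q) = 0"
  using ginv_gm_sum[of q l "\<lambda>j. mink t0 V (pd j X q)"]
  by (simp add: norpart_def tanpart_def tcoef_def mink_linear gm_def)

lemma mink_norpart_norpart: "q \<in> U \<Longrightarrow>
  mink t0 (norpart t0 X V q) (norpart t0 X W q) = mink t0 V W - (\<Sum>k<2. tcoef t0 X V k q * mink t0 (pd k X q) W)"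
  by (simp add: norpart_def[of t0 X W] tanpart_def mink_linear mink_norpart_pd)
     (simp add: norpart_def tanpart_def mink_linear)

lemma has_partial_deriv_zcoef:
  assumes "q \<in> U" "k < 2" "i < 2"
  shows "has_partial_deriv k (zcoef t0 X Z i) (mink t0 Z (pd k (pd i X) q)) q"
proof -
  have "has_partial_deriv k (\<lambda>q. mink t0 Z (pd i X q)) (mink t0 0 (pd i X q) + mink t0 Z (pd k (pd i X) q)) q"
    using assms by (intro has_partial_deriv_mink has_partial_deriv_const has_partial_deriv_pd pdiffble_pd)
  then show ?thesis by (simp add: zcoef_def[abs_def])
qed

lemma has_partial_deriv_sff_coef:
  assumes "p \<in> U" "k < 2" "i < 2" "j < 2"
  shows "has_partial_deriv k (sff_coef t0 X Z i j) (mink t0 Z (pd k (pd i (pd j X)) p)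
     - (\<Sum>m<2. pd k (christoffel t0 X m i j) p * zcoef t0 X Z m p
               + christoffel t0 X m i j p * mink t0 Z (pd k (pd m X) p))) p"
proof -
  have "has_partial_deriv k (\<lambda>q. mink t0 Z (pd i (pd j X) q))
      (mink t0 0 (pd i (pd j X) p) + mink t0 Z (pd k (pd i (pd j X)) p)) p"
    using assms by (intro has_partial_deriv_mink has_partial_deriv_const has_partial_deriv_pd pdiffble_pd_pd)
  moreover have "has_partial_deriv k (\<lambda>q. \<Sum>m<2. christoffel t0 X m i j q * zcoef t0 X Z m q)
     (\<Sum>m<2. pd k (christoffel t0 X m i j) p * zcoef t0 X Z m p
       + christoffel t0 X m i j p * mink t0 Z (pd k (pd m X) p)) p"
    using assms
    by (intro has_partial_deriv_sum has_partial_deriv_mult has_partial_deriv_pd pdiffble_christoffel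
        has_partial_deriv_zcoef) auto
  ultimately show ?thesis
    unfolding sff_coef_def[abs_def] using has_partial_deriv_diff by fastforce
qed

lemma pdiffble_zcoef: "q \<in> U \<Longrightarrow> k < 2 \<Longrightarrow> i < 2 \<Longrightarrow> pdiffble k (zcoef t0 X Z i) q"
  using has_partial_deriv_imp_pdiffble[OF has_partial_deriv_zcoef] .

lemma pdiffble_sff_coef: "q \<in> U \<Longrightarrow> k < 2 \<Longrightarrow> i < 2 \<Longrightarrow> j < 2 \<Longrightarrow> pdiffble k (sff_coef t0 X Z i j) q"
  using has_partial_deriv_imp_pdiffble[OF has_partial_deriv_sff_coef] .

lemma tcoef_gm_sum: "q \<in> U \<Longrightarrow> n < 2 \<Longrightarrow> (\<Sum>l<2. tcoef t0 X Z l q * gm t0 X l n q) = zcoef t0 X Z n q"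
  unfolding tcoef_eq_zcoef by (rule ginv_gm_sum)

lemma mink_tanpart_tvec:
  assumes "q \<in> U"
  shows "mink t0 (tanpart t0 X Z q) (tvec X w q) = w 0 q * zcoef t0 X Z 0 q + w 1 q * zcoef t0 X Z 1 q"
proof -
  have "mink t0 (tanpart t0 X Z q) (tvec X w q) = (\<Sum>j<2. w j q * (\<Sum>l<2. tcoef t0 X Z l q * gm t0 X l j q))"
    by (simp add: tanpart_def tvec_def mink_linear gm_def sum_2 algebra_simps)
  then show ?thesis using tcoef_gm_sum[OF assms] by (simp add: sum_2)
qed

lemma mink_tanpart_tanpart:
  assumes "q \<in> U"
  shows "mink t0 (tanpart t0 X Z q) (tanpart t0 X Z q)
    = tcoef t0 X Z 0 q * zcoef t0 X Z 0 q + tcoef t0 X Z 1 q * zcoef t0 X Z 1 q"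
proof -
  have "mink t0 (tanpart t0 X Z q) (tanpart t0 X Z q)
      = (\<Sum>j<2. tcoef t0 X Z j q * (\<Sum>l<2. tcoef t0 X Z l q * gm t0 X l j q))"
    by (simp add: tanpart_def mink_linear gm_def sum_2 algebra_simps)
  then show ?thesis using tcoef_gm_sum[OF assms] by (simp add: sum_2)
qed

lemma gdet_tan_norm_eq:
  "q \<in> U \<Longrightarrow> gdet_tan_norm t0 X Z q
    = gdet t0 X q * (tcoef t0 X Z 0 q * zcoef t0 X Z 0 q + tcoef t0 X Z 1 q * zcoef t0 X Z 1 q)"
  using gdet_nonzero[of q] unfolding gdet_tan_norm_def tcoef_eq_zcoef
  by (simp add: sum_2 ginv_def gm_commute[of t0 X "Suc 0" 0] field_simps)

lemma mink_norpart_pd_pd: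
  assumes "q \<in> U" "i < 2" "j < 2"
  shows "mink t0 (norpart t0 X (pd i (pd j X) q) q) (norpart t0 X Z q) = sff_coef t0 X Z i j q"
proof -
  have "tcoef t0 X (pd i (pd j X) q) k q = christoffel t0 X k i j q" for k
    using assms by (simp add: tcoef_def christoffel_eq)
  moreover have "mink t0 (norpart t0 X (pd i (pd j X) q) q) (norpart t0 X Z q)
    = mink t0 (pd i (pd j X) q) Z - (\<Sum>k<2. tcoef t0 X (pd i (pd j X) q) k q * mink t0 (pd k X q) Z)"
    by (rule mink_norpart_norpart[OF assms(1)])
  ultimately show ?thesis
    unfolding sff_coef_def zcoef_def by (simp add: mink_commute[of t0 _ Z])
qed

lemma mink_sff_norpart: "q \<in> U \<Longrightarrow>
  mink t0 (sff t0 X v v q) (norpart t0 X Z q) = (\<Sum>i<2. \<Sum>j<2. v i * v j * sff_coef t0 X Z i j q)"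
  by (simp add: sff_def mink_linear sum_2 mink_norpart_pd_pd)

lemma sff_coef_commute: "q \<in> U \<Longrightarrow> i < 2 \<Longrightarrow> j < 2 \<Longrightarrow> sff_coef t0 X Z i j q = sff_coef t0 X Z j i q"
  by (simp add: sff_coef_def pd_pd_commute[of q i j] christoffel_commute[of t0 X _ i j])

lemma sff_coef_tcoef_kernel:
  assumes q: "q \<in> U" and k: "k < 2" and null: "\<And>q. q \<in> U \<Longrightarrow> gdet_tan_norm t0 X Z q = 0"
  shows "tcoef t0 X Z 0 q * sff_coef t0 X Z k 0 q + tcoef t0 X Z 1 q * sff_coef t0 X Z k 1 q = 0"
proof -
  define p where "p = (\<lambda>i j. mink t0 (pd k (pd i X) q) (pd j X q))"
  define y where "y = (\<lambda>j. mink t0 Z (pd k (pd j X) q))"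
  define g00 where "g00 = gm t0 X 0 0 q"
  define g01 where "g01 = gm t0 X 0 1 q"
  define g11 where "g11 = gm t0 X 1 1 q"
  define z0 where "z0 = zcoef t0 X Z 0 q"
  define z1 where "z1 = zcoef t0 X Z 1 q"
  have gm: "has_partial_deriv k (gm t0 X i j) (p i j + p j i) q" if "i < 2" "j < 2" for i j
    using has_partial_deriv_gm[OF q k that] by (simp add: p_def mink_commute[of t0 "pd i X q"])
  have z: "has_partial_deriv k (zcoef t0 X Z i) (y i) q" if "i < 2" for i
    using has_partial_deriv_zcoef[OF q k that] by (simp add: y_def)
  have "has_partial_deriv k (gdet_tan_norm t0 X Z)
     (((p 1 1 + p 1 1) * z0 + g11 * y 0) * z0 + g11 * z0 * y 0
      - (((0 * g01 + 2 * (p 0 1 + p 1 0)) * z0 + 2 * g01 * y 0) * z1 + 2 * g01 * z0 * y 1)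
      + (((p 0 0 + p 0 0) * z1 + g00 * y 1) * z1 + g00 * z1 * y 1)) q"
    unfolding gdet_tan_norm_def[abs_def] g00_def g01_def g11_def z0_def z1_def
    by (intro has_partial_deriv_add has_partial_deriv_diff has_partial_deriv_mult has_partial_deriv_const gm z)
       auto
  moreover have "has_partial_deriv k (gdet_tan_norm t0 X Z) 0 q"
    by (rule has_partial_deriv_transform_open[OF has_partial_deriv_const open_U q]) (use null in auto)
  ultimately have "(p 1 1 + p 1 1) * z0 * z0 + g11 * (y 0 * z0 + z0 * y 0)
      - 2 * ((p 0 1 + p 1 0) * z0 * z1 + g01 * (y 0 * z1 + z0 * y 1))
      + (p 0 0 + p 0 0) * z1 * z1 + g00 * (y 1 * z1 + z1 * y 1) = 0"
    by (auto dest: has_partial_deriv_unique simp: algebra_simps)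
  moreover have "g11 * z0 * z0 - 2 * g01 * z0 * z1 + g00 * z1 * z1 = 0"
    using null[OF q] unfolding gdet_tan_norm_def g00_def g01_def g11_def z0_def z1_def .
  moreover define e where "e = 1 / gdet t0 X q"
  moreover have "e * (g00 * g11 - g01 * g01) = 1"
    using gdet_nonzero[OF q]
    by (simp add: e_def gdet_def g00_def g01_def g11_def gm_commute[of t0 X "Suc 0" 0])
  ultimately have key: "((g11 * e) * z0 + (- g01 * e) * z1)
      * (y 0 - (((g11 * e) * p 0 0 + (- g01 * e) * p 0 1) * z0 + ((- g01 * e) * p 0 0 + (g00 * e) * p 0 1) * z1))
    + ((- g01 * e) * z0 + (g00 * e) * z1)
      * (y 1 - (((g11 * e) * p 1 0 + (- g01 * e) * p 1 1) * z0 + ((- g01 * e) * p 1 0 + (g00 * e) * p 1 1) * z1))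
    = 0"
    by (intro null_form_deriv_alg)
  have ginv: "ginv t0 X 0 0 q = g11 * e" "ginv t0 X 0 1 q = - g01 * e" "ginv t0 X 1 0 q = - g01 * e"
     "ginv t0 X 1 1 q = g00 * e"
    by (simp_all add: e_def ginv_def g00_def g01_def g11_def gm_commute[of t0 X "Suc 0" 0])
  have "christoffel t0 X m k j q = ginv t0 X m 0 q * p j 0 + ginv t0 X m 1 q * p j 1" if "j < 2" for m j
    using christoffel_eq[OF q k that] by (simp add: sum_2 p_def pd_pd_commute[OF q k that])
  moreover have "sff_coef t0 X Z k j q = y j - (christoffel t0 X 0 k j q * z0 + christoffel t0 X 1 k j q * z1)" for j
    by (simp add: sff_coef_def y_def sum_2 z0_def z1_def)
  ultimately show ?thesis
    using key by (simp add: tcoef_eq_zcoef sum_2 ginv z0_def[symmetric] z1_def[symmetric] del: One_nat_def)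
qed

lemma sff_coef_rank_one:
  assumes q: "q \<in> U" and null: "\<And>q. q \<in> U \<Longrightarrow> gdet_tan_norm t0 X Z q = 0"
    and tan: "tanpart t0 X Z q \<noteq> 0"
    and v: "v 0 * zcoef t0 X Z 0 q + v 1 * zcoef t0 X Z 1 q = -1"
    and ij: "i < 2" "j < 2"
  shows "sff_coef t0 X Z i j q
    = (\<Sum>i<2. \<Sum>j<2. v i * v j * sff_coef t0 X Z i j q) * zcoef t0 X Z i q * zcoef t0 X Z j q"
proof -
  define a where "a = (\<Sum>i<2. \<Sum>j<2. v i * v j * sff_coef t0 X Z i j q)"
  have H10: "sff_coef t0 X Z 1 0 q = sff_coef t0 X Z 0 1 q"
    using sff_coef_commute[OF q, of 1 0] by simp
  have k0: "sff_coef t0 X Z 0 0 q * tcoef t0 X Z 0 q + sff_coef t0 X Z 0 1 q * tcoef t0 X Z 1 q = 0"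
    using sff_coef_tcoef_kernel[OF q _ null, of 0] by (simp add: algebra_simps)
  have k1: "sff_coef t0 X Z 0 1 q * tcoef t0 X Z 0 q + sff_coef t0 X Z 1 1 q * tcoef t0 X Z 1 q = 0"
    using sff_coef_tcoef_kernel[OF q _ null, of 1] H10 by (simp add: algebra_simps)
  have null_q: "zcoef t0 X Z 0 q * tcoef t0 X Z 0 q + zcoef t0 X Z 1 q * tcoef t0 X Z 1 q = 0"
  proof -
    have "gdet t0 X q * (tcoef t0 X Z 0 q * zcoef t0 X Z 0 q + tcoef t0 X Z 1 q * zcoef t0 X Z 1 q) = 0"
      using null[OF q] gdet_tan_norm_eq[OF q] by simp
    then show ?thesis using gdet_nonzero[OF q] by (simp add: mult.commute)
  qed
  have a: "a = v 0 * v 0 * sff_coef t0 X Z 0 0 q + 2 * v 0 * v 1 * sff_coef t0 X Z 0 1 q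
      + v 1 * v 1 * sff_coef t0 X Z 1 1 q"
    using H10 by (simp add: a_def sum_2 algebra_simps)
  have "sff_coef t0 X Z i j q = a * zcoef t0 X Z i q * zcoef t0 X Z j q"
    using symmetric_rank_one_of_kernel[OF k0 k1 null_q tcoef_nonzero_if_tanpart_nonzero[OF tan] v a] ij H10
    by (auto simp: less_Suc_eq numeral_2_eq_2 ac_simps)
  then show ?thesis by (simp only: a_def)
qed

end

section \<open>Curvature of a chart with rank-one normal curvature along \<open>Z\<close>\<close>

locale rank_one_sff_chart = nondegenerate_chart +
  fixes Z :: "real^'m" and a :: "real \<times> real \<Rightarrow> real"
  assumes zcoef_nonzero: "\<And>q. q \<in> U \<Longrightarrow> zcoef t0 X Z 0 q \<noteq> 0 \<or> zcoef t0 X Z 1 q \<noteq> 0"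
    and sff_coef_factor: "\<And>q i j. q \<in> U \<Longrightarrow> i < 2 \<Longrightarrow> j < 2 \<Longrightarrow>
      sff_coef t0 X Z i j q = a q * zcoef t0 X Z i q * zcoef t0 X Z j q"
begin

lemma pdiffble_factor:
  assumes p: "p \<in> U" and k: "k < 2"
  shows "pdiffble k a p"
proof -
  define N where "N = (\<lambda>q. zcoef t0 X Z 0 q * zcoef t0 X Z 0 q + zcoef t0 X Z 1 q * zcoef t0 X Z 1 q)"
  have N: "N q \<noteq> 0" if "q \<in> U" for q
    using zcoef_nonzero[OF that] unfolding N_def
    by (metis add_nonneg_eq_0_iff mult_eq_0_iff zero_le_square)
  have "pdiffble k (\<lambda>q. (sff_coef t0 X Z 0 0 q + sff_coef t0 X Z 1 1 q) / N q) p"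
    using p k N[OF p] unfolding N_def
    by (intro pdiffble_divide pdiffble_add pdiffble_mult pdiffble_sff_coef pdiffble_zcoef) auto
  moreover have "(sff_coef t0 X Z 0 0 q + sff_coef t0 X Z 1 1 q) / N q = a q" if "q \<in> U" for q
    using sff_coef_factor[OF that, of 0 0] sff_coef_factor[OF that, of 1 1] N[OF that]
    by (simp add: N_def field_simps)
  ultimately show ?thesis by (rule pdiffble_transform_open[OF _ open_U p])
qed

text \<open>The derivative of \<open>sff_coef = a z\<^sub>i z\<^sub>j\<close>, solved for the derivatives of the Christoffel
  symbols; here the constancy of \<open>Z\<close> enters through \<open>\<partial>\<^sub>k z\<^sub>i = \<langle>Z, X\<^sub>k\<^sub>i\<rangle>\<close>.\<close>

lemma pd_christoffel_zcoef_sum: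
  assumes p: "p \<in> U" and kij: "k < 2" "i < 2" "j < 2"
  shows "(\<Sum>m<2. pd k (christoffel t0 X m i j) p * zcoef t0 X Z m p)
    = mink t0 Z (pd k (pd i (pd j X)) p) - (\<Sum>m<2. christoffel t0 X m i j p * mink t0 Z (pd k (pd m X) p))
      - (pd k a p * zcoef t0 X Z i p * zcoef t0 X Z j p
         + a p * (mink t0 Z (pd k (pd i X) p) * zcoef t0 X Z j p + zcoef t0 X Z i p * mink t0 Z (pd k (pd j X) p)))"
proof -
  have "has_partial_deriv k (\<lambda>q. a q * zcoef t0 X Z i q * zcoef t0 X Z j q)
     ((pd k a p * zcoef t0 X Z i p + a p * mink t0 Z (pd k (pd i X) p)) * zcoef t0 X Z j p
       + a p * zcoef t0 X Z i p * mink t0 Z (pd k (pd j X) p)) p"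
    using kij p by (intro has_partial_deriv_mult has_partial_deriv_pd pdiffble_factor has_partial_deriv_zcoef)
  then have "has_partial_deriv k (sff_coef t0 X Z i j)
     ((pd k a p * zcoef t0 X Z i p + a p * mink t0 Z (pd k (pd i X) p)) * zcoef t0 X Z j p
       + a p * zcoef t0 X Z i p * mink t0 Z (pd k (pd j X) p)) p"
    by (rule has_partial_deriv_transform_open[OF _ open_U p]) (use sff_coef_factor kij in auto)
  from has_partial_deriv_unique[OF this has_partial_deriv_sff_coef[OF p kij]]
  show ?thesis by (simp add: sum_2 algebra_simps)
qed

lemma zcoef_riemann_sum:
  assumes p: "p \<in> U" and i: "i < 2"
  shows "(\<Sum>n<2. zcoef t0 X Z n p * riemann t0 X n 0 1 i p)
    = zcoef t0 X Z i p * (pd 1 a p * zcoef t0 X Z 0 p - pd 0 a p * zcoef t0 X Z 1 p)"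
proof -
  define z where "z = (\<lambda>n. zcoef t0 X Z n p)"
  define zz where "zz = (\<lambda>i j. mink t0 Z (pd i (pd j X) p))"
  define G where "G = (\<lambda>m i j. christoffel t0 X m i j p)"
  define D where "D = (\<lambda>k m i j. pd k (christoffel t0 X m i j) p)"
  have "riemann t0 X n 0 1 i p = D 0 n 1 i - D 1 n 0 i + (\<Sum>m<2. G n 0 m * G m 1 i - G n 1 m * G m 0 i)" for n
    by (simp add: riemann_def D_def G_def)
  moreover have "(\<Sum>n<2. z n * (D 0 n 1 i - D 1 n 0 i + (\<Sum>m<2. G n 0 m * G m 1 i - G n 1 m * G m 0 i)))
    = z i * (pd 1 a p * z 0 - pd 0 a p * z 1)"
  proof (rule riemann_contraction_alg[where zzz="\<lambda>k i j. mink t0 Z (pd k (pd i (pd j X)) p)"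
        and ad="\<lambda>k. pd k a p" and a="a p", OF i])
    show "mink t0 Z (pd 0 (pd 1 (pd i X)) p) = mink t0 Z (pd 1 (pd 0 (pd i X)) p)"
      using pd_pd_pd_commute_outer[OF p, of 0 1 i] i by simp
    show "\<And>m i j. m < 2 \<Longrightarrow> i < 2 \<Longrightarrow> j < 2 \<Longrightarrow> G m i j = G m j i"
      unfolding G_def using christoffel_commute by blast
    show "zz i j = a p * z i * z j + (\<Sum>m<2. G m i j * z m)" if "i < 2" "j < 2" for i j
      using sff_coef_factor[OF p that] unfolding sff_coef_def zz_def z_def G_def by simp
    show "(\<Sum>m<2. D k m i j * z m) = mink t0 Z (pd k (pd i (pd j X)) p) - (\<Sum>m<2. G m i j * zz k m)
        - (pd k a p * z i * z j + a p * (zz k i * z j + z i * zz k j))"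
      if "k < 2" "i < 2" "j < 2" for k i j
      using pd_christoffel_zcoef_sum[OF p that] unfolding D_def G_def zz_def z_def .
  qed
  ultimately show ?thesis by (simp add: z_def)
qed

lemma gauss_curv_eq_dir_deriv:
  assumes p: "p \<in> U" and null: "gdet_tan_norm t0 X Z p = 0"
  shows "gauss_curv t0 X p = dir_deriv (tcoef t0 X Z) a p"
proof -
  define z where "z = (\<lambda>n. zcoef t0 X Z n p)"
  define c where "c = (\<lambda>l. tcoef t0 X Z l p)"
  define R where "R = (\<lambda>n i. \<Sum>l<2. gm t0 X n l p * riemann t0 X l 0 1 i p)"
  have zR: "(\<Sum>n<2. z n * riemann t0 X n 0 1 i p) = c 0 * R 0 i + c 1 * R 1 i" for i
  proof -
    have "z n = c 0 * gm t0 X 0 n p + c 1 * gm t0 X 1 n p" if "n < 2" for n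
      using tcoef_gm_sum[OF p that, of Z] unfolding z_def c_def by (simp add: sum_2)
    then show ?thesis unfolding R_def by (simp add: sum_2 algebra_simps)
  qed
  have R_antisym: "R n i = - R i n" if "n < 2" "i < 2" for n i
    unfolding R_def using riemann_lowered_antisym[OF p that] .
  have "gdet t0 X p * c 0 = gm t0 X 1 1 p * z 0 - gm t0 X 0 1 p * z 1"
    "gdet t0 X p * c 1 = gm t0 X 0 0 p * z 1 - gm t0 X 0 1 p * z 0"
    using gdet_nonzero[OF p]
    by (simp_all add: c_def z_def tcoef_eq_zcoef sum_2 ginv_def gm_commute[of t0 X "Suc 0" 0] field_simps)
  moreover have "c 0 * R 0 1 = z 1 * (pd 1 a p * z 0 - pd 0 a p * z 1)"
    "c 1 * R 0 1 = - z 0 * (pd 1 a p * z 0 - pd 0 a p * z 1)"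
    using zcoef_riemann_sum[OF p, of 1] zcoef_riemann_sum[OF p, of 0] zR[of 1] zR[of 0]
      R_antisym[of 0 0] R_antisym[of 1 0] R_antisym[of 1 1]
    unfolding z_def by simp_all
  moreover have "gm t0 X 1 1 p * z 0 * z 0 - 2 * gm t0 X 0 1 p * z 0 * z 1 + gm t0 X 0 0 p * z 1 * z 1 = 0"
    using null unfolding gdet_tan_norm_def z_def .
  ultimately have "R 0 1 = gdet t0 X p * (c 0 * pd 0 a p + c 1 * pd 1 a p)"
    using curvature_from_null_contraction_alg[of "gdet t0 X p" "gm t0 X 0 0 p" "gm t0 X 1 1 p"
        "gm t0 X 0 1 p" "c 0" "z 0" "z 1" "c 1" "R 0 1" "pd 1 a p" "pd 0 a p"]
      gdet_nonzero[OF p] zcoef_nonzero[OF p]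
    by (simp add: gdet_def gm_commute[of t0 X "Suc 0" 0] z_def mult.commute)
  moreover have "gauss_curv t0 X p = R 0 1 / gdet t0 X p"
    unfolding gauss_curv_def R_def by (simp add: sum_2 gm_commute[of t0 X "Suc 0" 0] mult.commute)
  ultimately show ?thesis
    using gdet_nonzero[OF p] by (simp add: dir_deriv_def c_def sum_2)
qed

end

theorem mainTheorem5:
  fixes t0 :: "'m::finite"
    and X :: "real \<times> real \<Rightarrow> real^'m"
    and U :: "(real \<times> real) set"
    and Z :: "real^'m"
    and w :: "nat \<Rightarrow> real \<times> real \<Rightarrow> real"
  assumes surf: "timelike_surface t0 X U"
    and unitZ: "mink t0 Z Z = 1"
    and null_dir: "\<forall>p\<in>U. tanpart t0 X Z p \<noteq> 0 \<and>
                         mink t0 (tanpart t0 X Z p) (tanpart t0 X Z p) = 0"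
    and W_light: "\<forall>p\<in>U. tvec X w p \<noteq> 0 \<and> mink t0 (tvec X w p) (tvec X w p) = 0"
    and W_norm: "\<forall>p\<in>U. mink t0 (tanpart t0 X Z p) (tvec X w p) = -1"
    and a_def: "a = (\<lambda>p. mink t0 (sff t0 X (\<lambda>i. w i p) (\<lambda>i. w i p) p) (norpart t0 X Z p))"
  shows "\<forall>p\<in>U. gauss_curv t0 X p = dir_deriv (tcoef t0 X Z) a p"
proof -
  interpret nondegenerate_chart t0 X U
    using surf unfolding timelike_surface_def by unfold_locales auto
  have null: "gdet_tan_norm t0 X Z q = 0" if "q \<in> U" for q
    using null_dir that by (simp add: gdet_tan_norm_eq mink_tanpart_tanpart)
  have "sff_coef t0 X Z i j q = a q * zcoef t0 X Z i q * zcoef t0 X Z j q" if "q \<in> U" "i < 2" "j < 2" for q i j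
    using sff_coef_rank_one[OF \<open>q \<in> U\<close> null _ _ that(2,3), of "\<lambda>i. w i q"] null_dir W_norm that
    by (simp add: a_def mink_sff_norpart mink_tanpart_tvec)
  moreover have "zcoef t0 X Z 0 q \<noteq> 0 \<or> zcoef t0 X Z 1 q \<noteq> 0" if "q \<in> U" for q
    using null_dir that zcoef_nonzero_if_tanpart_nonzero by blast
  ultimately interpret rank_one_sff_chart t0 X U Z a
    by (intro rank_one_sff_chart.intro nondegenerate_chart_axioms rank_one_sff_chart_axioms.intro)
  show ?thesis using gauss_curv_eq_dir_deriv null by blast
qed

end
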